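(* There exists a $(5,30)$ strategy for the GKS game.
   Context: The GKS game with parameter $n$ (a positive integer). A strategy pair $(S,T)$ consists of a function $S$ assigning a bit in $\{0,1\}$ to every sequence $\pi_1\pi_2\ldots\pi_i$ of distinct elements of $[n]=\{1,\dots,n\}$ with $1\le i\le n-1$, and a function $T:\{0,1\}^n\to 2^{[n]}$. For a permutation $\pi=\pi_1\ldots\pi_n$ of $[n]$ and a bit $b$, the final array $A_{\rm final}\in\{0,1\}^n$ is defined by $A_{\rm final}[\pi_i]=S(\pi_1\ldots\pi_i)$ for $1\le i\le n-1$ and $A_{\rm final}[\pi_n]=b$. The pair $(S,T)$ is a $(k,n)$ strategy if for every permutation $\pi$ of $[n]$ and every bit $b$ we have $\pi_n\in T(A_{\rm final})$, and moreover $|T(\sigma)|\le k$ for every $\sigma\in\{0,1\}^n$. *)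

theory Defs
  imports Main
begin

text \<open>Bits are bool (False = 0, True = 1). An array in {0,1}^n is a bool list of length n,
  whose entry at position j-1 is A[j].\<close>

definition final_array ::
    "nat \<Rightarrow> (nat list \<Rightarrow> bool) \<Rightarrow> nat list \<Rightarrow> bool \<Rightarrow> bool list" where
  "final_array n S \<pi> b =
     map (\<lambda>j. if j = last \<pi> then b
               else S (take (Suc (the_elem {i. i < n \<and> \<pi> ! i = j})) \<pi>)) [1..<Suc n]"

definition is_strategy ::
    "nat \<Rightarrow> nat \<Rightarrow> (nat list \<Rightarrow> bool) \<Rightarrow> (bool list \<Rightarrow> nat set) \<Rightarrow> bool" where
  "is_strategy k n S T \<longleftrightarrow>
     (\<forall>\<sigma>. length \<sigma> = n \<longrightarrow> T \<sigma> \<subseteq> {1..n} \<and> card (T \<sigma>) \<le> k) \<and>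
     (\<forall>\<pi> b. distinct \<pi> \<and> set \<pi> = {1..n} \<longrightarrow> last \<pi> \<in> T (final_array n S \<pi> b))"

end

theory Submission
  imports Defs
begin

text \<open>Split the cells \<open>1..30\<close> into five blocks of six and fix six words of length six at
  pairwise Hamming distance at least three. When a block is entered, the offset of its first
  cell selects a codeword; every cell of the block is then written with its codeword bit, except
  the sixth cell of the block, which gets the flipped bit. So each block not containing
  \<open>\<pi>\<^sub>n\<close> ends up as its codeword flipped at its last revealed cell, while the block of
  \<open>\<pi>\<^sub>n\<close> ends up either as its codeword, with \<open>\<pi>\<^sub>n\<close> different from the first
  cell, or as its codeword flipped at \<open>\<pi>\<^sub>n\<close>. Distance three separates codewords from
  single flips and makes the flip position unique, so \<open>T\<close> can answer with the five
  non-first cells of a block carrying a codeword if there is one, and with the five flip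
  positions otherwise.\<close>

section \<open>Hamming distance and single-error codes\<close>

definition hamming :: "bool list \<Rightarrow> bool list \<Rightarrow> nat" where
  "hamming u v = card {i. i < length u \<and> u ! i \<noteq> v ! i}"

definition flip :: "bool list \<Rightarrow> nat \<Rightarrow> bool list" where
  "flip u j = u[j := \<not> u ! j]"

definition distance_at_least :: "nat \<Rightarrow> bool list set \<Rightarrow> bool" where
  "distance_at_least d C \<longleftrightarrow> (\<forall>u\<in>C. \<forall>v\<in>C. u \<noteq> v \<longrightarrow> d \<le> hamming u v)"

lemma hamming_conv_filter: "hamming u v = length (filter (\<lambda>i. u ! i \<noteq> v ! i) [0..<length u])"
  unfolding hamming_def length_filter_conv_card by (rule arg_cong[where f = card]) auto

lemma hamming_commute: "length u = length v \<Longrightarrow> hamming u v = hamming v u"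
  unfolding hamming_def by metis

lemma hamming_triangle:
  assumes "length u = length v"
  shows "hamming u w \<le> hamming u v + hamming v w"
proof -
  have "{i. i < length u \<and> u ! i \<noteq> w ! i}
          \<subseteq> {i. i < length u \<and> u ! i \<noteq> v ! i} \<union> {i. i < length v \<and> v ! i \<noteq> w ! i}"
    using assms by auto
  then have "hamming u w \<le> card ({i. i < length u \<and> u ! i \<noteq> v ! i} \<union> {i. i < length v \<and> v ! i \<noteq> w ! i})"
    unfolding hamming_def by (intro card_mono) auto
  also have "\<dots> \<le> hamming u v + hamming v w"
    unfolding hamming_def by (rule card_Un_le)
  finally show ?thesis .
qed

lemma length_flip [simp]: "length (flip u j) = length u"
  by (simp add: flip_def)

lemma nth_flip: "i < length u \<Longrightarrow> flip u j ! i = (u ! i \<noteq> (i = j))"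
  by (auto simp: flip_def nth_list_update)

lemma hamming_flip: "j < length u \<Longrightarrow> hamming u (flip u j) = 1"
proof -
  assume "j < length u"
  then have "{i. i < length u \<and> u ! i \<noteq> flip u j ! i} = {j}"
    by (auto simp: nth_flip)
  then show ?thesis by (simp add: hamming_def)
qed

lemma flip_not_in_code:
  assumes "distance_at_least 3 C" "u \<in> C" "v \<in> C" "j < length u"
  shows "flip u j \<noteq> v"
proof
  assume v: "flip u j = v"
  then have "u = v"
    using assms hamming_flip[of j u] unfolding distance_at_least_def by fastforce
  then show False
    using v nth_flip[of j u j] assms(4) by simp
qed

lemma flip_in_code_inj:
  assumes "distance_at_least 3 C" "u \<in> C" "v \<in> C" "j < length u" "j' < length v"
    and eq: "flip u j = flip v j'"
  shows "u = v \<and> j = j'"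
proof -
  have "length u = length v"
    using arg_cong[OF eq, of length] by simp
  have "hamming u v \<le> hamming u (flip u j) + hamming (flip u j) v"
    by (rule hamming_triangle) simp
  also have "\<dots> = 2"
    using assms(4,5) hamming_flip[of j u] hamming_flip[of j' v]
    by (simp add: eq hamming_commute[of "flip v j'" v])
  finally have "u = v"
    using assms(1-3) unfolding distance_at_least_def by fastforce
  moreover have "j = j'"
  proof (rule ccontr)
    assume "j \<noteq> j'"
    then have "flip u j ! j \<noteq> flip v j' ! j"
      using \<open>u = v\<close> assms(4) by (simp add: nth_flip)
    then show False using eq by simp
  qed
  ultimately show ?thesis ..
qed

definition code6 :: "bool list list" where
  "code6 = [[False, False, False, False, False, False],
            [True,  False, False, False, True,  True ],
            [False, True,  False, True,  False, True ],
            [False, False, True,  True,  True,  False],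
            [True,  True,  False, True,  True,  False],
            [True,  False, True,  True,  False, True ]]"

lemma distance_at_least_code6: "distance_at_least 3 (set code6)"
  by (simp add: distance_at_least_def hamming_conv_filter code6_def upt_conv_Cons)

lemma length_code6 [simp]: "length code6 = 6"
  by (simp add: code6_def)

lemma distinct_code6: "distinct code6"
  by (simp add: code6_def)

lemma length_code6_word: "u \<in> set code6 \<Longrightarrow> length u = 6"
  by (auto simp: code6_def)

lemma length_final_array [simp]: "length (final_array n S \<pi> b) = n"
  by (simp add: final_array_def)

lemma nth_final_array:
  assumes "x \<in> {1..n}"
  shows "final_array n S \<pi> b ! (x - 1) =
    (if x = last \<pi> then b else S (take (Suc (the_elem {i. i < n \<and> \<pi> ! i = x})) \<pi>))"
proof -
  have "x - 1 < length [1..<Suc n]" "[1..<Suc n] ! (x - 1) = x"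
    using assms by (auto simp del: upt_Suc)
  then show ?thesis
    unfolding final_array_def by (simp only: nth_map)
qed

lemma nth_final_array_nth:
  assumes "distinct \<pi>" "set \<pi> = {1..n}" "t < length \<pi>"
  shows "final_array n S \<pi> b ! (\<pi> ! t - 1) = (if \<pi> ! t = last \<pi> then b else S (take (Suc t) \<pi>))"
proof -
  have "length \<pi> = n"
    using distinct_card[OF assms(1)] assms(2) by simp
  then have "{i. i < n \<and> \<pi> ! i = \<pi> ! t} = {t}"
    using assms(1,3) nth_eq_iff_index_eq by auto
  moreover have "\<pi> ! t \<in> {1..n}"
    using assms(2,3) nth_mem by blast
  ultimately show ?thesis
    using nth_final_array[of "\<pi> ! t" n S \<pi> b] by simp
qed

lemma filter_take_Suc_nth:
  "t < length xs \<Longrightarrow> P (xs ! t) \<Longrightarrow> filter P (take (Suc t) xs) = filter P (take t xs) @ [xs ! t]"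
  by (simp add: take_Suc_conv_app_nth)

lemma hd_filter_take_Suc_nth:
  assumes "t < length xs" "P (xs ! t)"
  shows "hd (filter P (take (Suc t) xs)) = hd (filter P xs)"
proof -
  have "filter P xs = filter P (take (Suc t) xs) @ filter P (drop (Suc t) xs)"
    by (metis append_take_drop_id filter_append)
  then show ?thesis
    using filter_take_Suc_nth[of t xs P, OF assms] by (simp add: hd_append)
qed

lemma length_filter_take_Suc_nth_eq_iff:
  assumes "distinct xs" "t < length xs" "P (xs ! t)"
  shows "length (filter P (take (Suc t) xs)) = length (filter P xs) \<longleftrightarrow> xs ! t = last (filter P xs)"
proof -
  define A where "A = filter P (take (Suc t) xs)"
  define D where "D = filter P (drop (Suc t) xs)"
  have split: "filter P xs = A @ D"
    unfolding A_def D_def by (metis append_take_drop_id filter_append)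
  have "last A = xs ! t" "xs ! t \<in> set A"
    using filter_take_Suc_nth[of t xs P, OF assms(2,3)] unfolding A_def by simp_all
  moreover have "set A \<inter> set D = {}"
    using assms(1) split by (metis distinct_append distinct_filter)
  ultimately have "length A = length (A @ D) \<longleftrightarrow> xs ! t = last (A @ D)"
  proof (cases "D = []")
    case False
    then have "last (A @ D) \<in> set D"
      by simp
    then show ?thesis
      using False \<open>xs ! t \<in> set A\<close> \<open>set A \<inter> set D = {}\<close> by auto
  qed simp
  then show ?thesis
    unfolding A_def[symmetric] split .
qed

section \<open>Blocks\<close>

definition block :: "nat \<Rightarrow> nat" where
  "block x = (x - 1) div 6"

definition offset :: "nat \<Rightarrow> nat" where
  "offset x = (x - 1) mod 6"

definition cell :: "nat \<Rightarrow> nat \<Rightarrow> nat" where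
  "cell c i = 6 * c + i + 1"

lemma block_cell [simp]: "i < 6 \<Longrightarrow> block (cell c i) = c"
  by (simp add: block_def cell_def)

lemma offset_cell [simp]: "i < 6 \<Longrightarrow> offset (cell c i) = i"
  by (simp add: offset_def cell_def)

lemma offset_less: "offset x < 6"
  by (simp add: offset_def)

lemma block_less: "x \<in> {1..30} \<Longrightarrow> block x < 5"
  by (auto simp: block_def)

lemma cell_block_offset: "1 \<le> x \<Longrightarrow> cell (block x) (offset x) = x"
  by (simp add: cell_def block_def offset_def)

lemma cell_eq_cell_iff: "i < 6 \<Longrightarrow> j < 6 \<Longrightarrow> cell c i = cell c j \<longleftrightarrow> i = j"
  by (simp add: cell_def)

lemma cell_in_range: "c < 5 \<Longrightarrow> i < 6 \<Longrightarrow> cell c i \<in> {1..30}"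
  by (simp add: cell_def)

lemma code6_nth_offset_mem: "code6 ! offset x \<in> set code6"
  using offset_less by simp

lemma length_code6_nth_offset: "length (code6 ! offset x) = 6"
  using length_code6_word code6_nth_offset_mem by blast

definition block_seq :: "nat list \<Rightarrow> nat \<Rightarrow> nat list" where
  "block_seq \<pi> c = filter (\<lambda>y. block y = c) \<pi>"

lemma block_seq_elem:
  assumes "set \<pi> = {1..30}" "y \<in> set (block_seq \<pi> c)"
  shows "y = cell c (offset y)"
proof -
  have "1 \<le> y" "block y = c"
    using assms unfolding block_seq_def by auto
  then show ?thesis
    using cell_block_offset by metis
qed

lemma set_block_seq:
  assumes "set \<pi> = {1..30}" "c < 5"
  shows "set (block_seq \<pi> c) = cell c ` {..<6}"
proof
  show "set (block_seq \<pi> c) \<subseteq> cell c ` {..<6}"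
    using block_seq_elem[OF assms(1)] offset_less by blast
  show "cell c ` {..<6} \<subseteq> set (block_seq \<pi> c)"
    using assms cell_in_range unfolding block_seq_def by auto
qed

lemma length_block_seq:
  assumes "distinct \<pi>" "set \<pi> = {1..30}" "c < 5"
  shows "length (block_seq \<pi> c) = 6"
proof -
  have "length (block_seq \<pi> c) = card (cell c ` {..<6})"
    using assms distinct_card[of "block_seq \<pi> c"] set_block_seq
    unfolding block_seq_def by simp
  also have "\<dots> = 6"
    by (simp add: card_image inj_on_def cell_def)
  finally show ?thesis .
qed

definition block_word :: "bool list \<Rightarrow> nat \<Rightarrow> bool list" where
  "block_word \<sigma> c = take 6 (drop (6 * c) \<sigma>)"

lemma length_block_word: "length \<sigma> = 30 \<Longrightarrow> c < 5 \<Longrightarrow> length (block_word \<sigma> c) = 6"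
  by (simp add: block_word_def)

lemma nth_block_word:
  "length \<sigma> = 30 \<Longrightarrow> c < 5 \<Longrightarrow> i < 6 \<Longrightarrow> block_word \<sigma> c ! i = \<sigma> ! (cell c i - 1)"
  by (simp add: block_word_def cell_def add.commute)

section \<open>The strategy\<close>

definition gks_S :: "nat list \<Rightarrow> bool" where
  "gks_S l = (let P = filter (\<lambda>y. block y = block (last l)) l in
     code6 ! offset (hd P) ! offset (last l) \<noteq> (length P = 6))"

definition gks_T :: "bool list \<Rightarrow> nat set" where
  "gks_T \<sigma> =
    (if \<exists>c<5. block_word \<sigma> c \<in> set code6 then
       (case SOME (c, f). c < 5 \<and> f < 6 \<and> block_word \<sigma> c = code6 ! f of
          (c, f) \<Rightarrow> cell c ` ({..<6} - {f}))
     else {cell c j | c j. c < 5 \<and> j < 6 \<and> (\<exists>u\<in>set code6. block_word \<sigma> c = flip u j)})"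

lemma some_codeword_block:
  assumes "\<exists>c<5. block_word \<sigma> c \<in> set code6"
  obtains c f where "(SOME (c, f). c < 5 \<and> f < 6 \<and> block_word \<sigma> c = code6 ! f) = (c, f)"
    and "c < 5" "f < 6" "block_word \<sigma> c = code6 ! f"
proof -
  from assms obtain c f where "c < 5" "f < 6" "block_word \<sigma> c = code6 ! f"
    by (auto simp: in_set_conv_nth)
  then have "\<exists>p. case p of (c, f) \<Rightarrow> c < 5 \<and> f < 6 \<and> block_word \<sigma> c = code6 ! f"
    by auto
  from someI_ex[OF this] show ?thesis
    using that by (auto split: prod.splits)
qed

lemma gks_T_bounds: "gks_T \<sigma> \<subseteq> {1..30} \<and> card (gks_T \<sigma>) \<le> 5"
proof (cases "\<exists>c<5. block_word \<sigma> c \<in> set code6")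
  case True
  then obtain c f where some: "(SOME (c, f). c < 5 \<and> f < 6 \<and> block_word \<sigma> c = code6 ! f) = (c, f)"
      and "c < 5" "f < 6"
    by (rule some_codeword_block)
  have T: "gks_T \<sigma> = cell c ` ({..<6} - {f})"
    using True some by (simp add: gks_T_def)
  have "card (cell c ` ({..<6} - {f})) \<le> card ({..<6::nat} - {f})"
    by (rule card_image_le) simp
  also have "\<dots> = 5"
    using \<open>f < 6\<close> by simp
  finally show ?thesis
    unfolding T using \<open>c < 5\<close> cell_in_range by auto
next
  case False
  define A where "A = {cell c j | c j. c < 5 \<and> j < 6 \<and> (\<exists>u\<in>set code6. block_word \<sigma> c = flip u j)}"
  have T: "gks_T \<sigma> = A"
    unfolding gks_T_def A_def by (rule if_not_P[OF False])
  have "inj_on block A"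
  proof (rule inj_onI)
    fix x y assume "x \<in> A" "y \<in> A" "block x = block y"
    then obtain c j j' u v where "x = cell c j" "y = cell c j'" "j < 6" "j' < 6"
        and uv: "u \<in> set code6" "v \<in> set code6" "flip u j = flip v j'"
      unfolding A_def by auto
    moreover have "j = j'"
      using flip_in_code_inj[OF distance_at_least_code6 uv(1,2) _ _ uv(3)]
        length_code6_word uv \<open>j < 6\<close> \<open>j' < 6\<close> by simp
    ultimately show "x = y"
      by simp
  qed
  moreover have "block ` A \<subseteq> {..<5}"
    unfolding A_def by auto
  ultimately have "card A \<le> 5"
    using card_inj_on_le[of block A "{..<5}"] by simp
  moreover have "A \<subseteq> {1..30}"
    unfolding A_def using cell_in_range by auto
  ultimately show ?thesis
    unfolding T by simp
qed

lemma gks_T_codeword_block: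
  assumes "c0 < 5" "f0 < 6" "block_word \<sigma> c0 = code6 ! f0"
    and flips: "\<forall>c<5. c \<noteq> c0 \<longrightarrow> (\<exists>u\<in>set code6. \<exists>j<6. block_word \<sigma> c = flip u j)"
  shows "gks_T \<sigma> = cell c0 ` ({..<6} - {f0})"
proof -
  have ex: "\<exists>c<5. block_word \<sigma> c \<in> set code6"
    using assms(1-3) by auto
  then obtain c f where some: "(SOME (c, f). c < 5 \<and> f < 6 \<and> block_word \<sigma> c = code6 ! f) = (c, f)"
      and cf: "c < 5" "f < 6" "block_word \<sigma> c = code6 ! f"
    by (rule some_codeword_block)
  have T: "gks_T \<sigma> = cell c ` ({..<6} - {f})"
    using ex some by (simp add: gks_T_def)
  have "c = c0"
  proof (rule ccontr)
    assume "c \<noteq> c0"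
    then obtain u j where "u \<in> set code6" "j < 6" "flip u j = code6 ! f"
      using flips cf by metis
    then show False
      using flip_not_in_code[OF distance_at_least_code6] length_code6_word cf(2) by auto
  qed
  then have "f = f0"
    using cf assms(2,3) distinct_code6 nth_eq_iff_index_eq by fastforce
  with T \<open>c = c0\<close> show ?thesis by simp
qed

lemma gks_T_flip_blocks:
  assumes "\<forall>c<5. \<exists>u\<in>set code6. \<exists>j<6. block_word \<sigma> c = flip u j"
  shows "gks_T \<sigma> = {cell c j | c j. c < 5 \<and> j < 6 \<and> (\<exists>u\<in>set code6. block_word \<sigma> c = flip u j)}"
proof -
  have "\<not> (\<exists>c<5. block_word \<sigma> c \<in> set code6)"
    using assms flip_not_in_code[OF distance_at_least_code6] length_code6_word by fastforce
  then show ?thesis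
    unfolding gks_T_def by (rule if_not_P)
qed

context
  fixes \<pi> :: "nat list" and b :: bool
  assumes distinct: "distinct \<pi>" and set_perm: "set \<pi> = {1..30}"
begin

lemma length_perm: "length \<pi> = 30"
  using distinct_card[OF distinct] set_perm by simp

lemma block_perm_nth_less: "t < 30 \<Longrightarrow> block (\<pi> ! t) < 5"
  using set_perm length_perm by (intro block_less) auto

lemma gks_S_prefix:
  assumes "t < 30"
  defines "Q \<equiv> block_seq \<pi> (block (\<pi> ! t))"
  shows "gks_S (take (Suc t) \<pi>) = (code6 ! offset (hd Q) ! offset (\<pi> ! t) \<noteq> (\<pi> ! t = last Q))"
proof -
  let ?P = "\<lambda>y. block y = block (\<pi> ! t)"
  have t: "t < length \<pi>"
    using assms(1) length_perm by simp
  have "last (take (Suc t) \<pi>) = \<pi> ! t"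
    using t by (simp add: take_Suc_conv_app_nth)
  moreover have "hd (filter ?P (take (Suc t) \<pi>)) = hd Q"
    using hd_filter_take_Suc_nth[of t \<pi> ?P] t unfolding Q_def block_seq_def by simp
  moreover have "length (filter ?P (take (Suc t) \<pi>)) = 6 \<longleftrightarrow> \<pi> ! t = last Q"
    using length_filter_take_Suc_nth_eq_iff[of \<pi> t ?P] distinct t
      length_block_seq[OF distinct set_perm block_perm_nth_less[OF assms(1)]]
    unfolding Q_def block_seq_def by simp
  ultimately show ?thesis
    unfolding gks_S_def by (simp add: Let_def)
qed

lemma nth_final_array_gks_S:
  assumes "x \<in> {1..30}"
  defines "Q \<equiv> block_seq \<pi> (block x)"
  shows "final_array 30 gks_S \<pi> b ! (x - 1) =
    (if x = last \<pi> then b else code6 ! offset (hd Q) ! offset x \<noteq> (x = last Q))"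
proof -
  have "x \<in> set \<pi>"
    using assms(1) set_perm by simp
  then obtain t where t: "t < length \<pi>" "\<pi> ! t = x"
    by (auto simp: in_set_conv_nth)
  show ?thesis
    using nth_final_array_nth[OF distinct set_perm t(1), of gks_S b] gks_S_prefix[of t]
    unfolding t(2) Q_def using t length_perm by simp
qed

lemma last_block_seq_block_last: "last (block_seq \<pi> (block (last \<pi>))) = last \<pi>"
proof -
  have "\<pi> = butlast \<pi> @ [last \<pi>]"
    using length_perm by (intro append_butlast_last_id[symmetric]) auto
  moreover have "last (block_seq (butlast \<pi> @ [last \<pi>]) (block (last \<pi>))) = last \<pi>"
    unfolding block_seq_def by simp
  ultimately show ?thesis
    by simp
qed

lemma block_seq_hd_last:
  assumes "c < 5"
  shows "hd (block_seq \<pi> c) = cell c (offset (hd (block_seq \<pi> c)))"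
    and "last (block_seq \<pi> c) = cell c (offset (last (block_seq \<pi> c)))"
proof -
  have "block_seq \<pi> c \<noteq> []"
    using length_block_seq[OF distinct set_perm assms] by auto
  then show "hd (block_seq \<pi> c) = cell c (offset (hd (block_seq \<pi> c)))"
    and "last (block_seq \<pi> c) = cell c (offset (last (block_seq \<pi> c)))"
    using block_seq_elem[OF set_perm] by simp_all
qed

lemma block_word_final_array_other:
  assumes "c < 5" "c \<noteq> block (last \<pi>)"
  defines "Q \<equiv> block_seq \<pi> c"
  shows "block_word (final_array 30 gks_S \<pi> b) c = flip (code6 ! offset (hd Q)) (offset (last Q))"
proof (rule nth_equalityI)
  show "length (block_word (final_array 30 gks_S \<pi> b) c) = length (flip (code6 ! offset (hd Q)) (offset (last Q)))"
    using assms(1) length_code6_nth_offset by (simp add: length_block_word)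
next
  fix i assume "i < length (block_word (final_array 30 gks_S \<pi> b) c)"
  then have i: "i < 6"
    using assms(1) by (simp add: length_block_word)
  have "cell c i \<noteq> last \<pi>"
    using assms(2) i by (metis block_cell)
  moreover have "cell c i = last Q \<longleftrightarrow> i = offset (last Q)"
    using block_seq_hd_last(2)[OF assms(1)] cell_eq_cell_iff[OF i offset_less] unfolding Q_def by metis
  ultimately show "block_word (final_array 30 gks_S \<pi> b) c ! i = flip (code6 ! offset (hd Q)) (offset (last Q)) ! i"
    using nth_final_array_gks_S[OF cell_in_range[OF assms(1) i]] assms(1) i
    by (simp add: nth_block_word nth_flip length_code6_nth_offset Q_def)
qed

lemma last_perm_in_range: "last \<pi> \<in> {1..30}"
  using set_perm length_perm last_in_set by (metis list.size(3) zero_neq_numeral)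

lemma block_word_final_array_last:
  defines "c \<equiv> block (last \<pi>)"
  shows "block_word (final_array 30 gks_S \<pi> b) c = (code6 ! offset (hd (block_seq \<pi> c)))[offset (last \<pi>) := b]"
proof (rule nth_equalityI)
  from last_perm_in_range have c: "c < 5" and last: "last \<pi> = cell c (offset (last \<pi>))"
    unfolding c_def using block_less cell_block_offset by auto
  show "length (block_word (final_array 30 gks_S \<pi> b) c) = length ((code6 ! offset (hd (block_seq \<pi> c)))[offset (last \<pi>) := b])"
    using c length_code6_nth_offset by (simp add: length_block_word)
  fix i assume "i < length (block_word (final_array 30 gks_S \<pi> b) c)"
  then have i: "i < 6"
    using c by (simp add: length_block_word)
  have "cell c i = last \<pi> \<longleftrightarrow> i = offset (last \<pi>)"
    using last cell_eq_cell_iff[OF i offset_less] by metis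
  then show "block_word (final_array 30 gks_S \<pi> b) c ! i = (code6 ! offset (hd (block_seq \<pi> c)))[offset (last \<pi>) := b] ! i"
    using nth_final_array_gks_S[OF cell_in_range[OF c i]] last_block_seq_block_last c i
    by (simp add: nth_block_word nth_list_update length_code6_nth_offset c_def)
qed

lemma offset_hd_block_seq_block_last:
  "offset (hd (block_seq \<pi> (block (last \<pi>)))) \<noteq> offset (last \<pi>)"
proof -
  define c where "c = block (last \<pi>)"
  have c: "c < 5"
    using last_perm_in_range block_less unfolding c_def by blast
  have "distinct (block_seq \<pi> c)" "length (block_seq \<pi> c) = 6"
    using distinct length_block_seq[OF distinct set_perm c] by (simp_all add: block_seq_def)
  then have "hd (block_seq \<pi> c) \<noteq> last (block_seq \<pi> c)"
    by (cases "block_seq \<pi> c") auto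
  then show ?thesis
    using block_seq_hd_last[OF c] last_block_seq_block_last unfolding c_def by metis
qed

lemma last_in_gks_T: "last \<pi> \<in> gks_T (final_array 30 gks_S \<pi> b)"
proof -
  define \<sigma> where "\<sigma> = final_array 30 gks_S \<pi> b"
  define z where "z = last \<pi>"
  define c0 where "c0 = block z"
  define f0 where "f0 = offset (hd (block_seq \<pi> c0))"
  have c0: "c0 < 5" and z: "z = cell c0 (offset z)"
    using last_perm_in_range block_less cell_block_offset unfolding c0_def z_def by auto
  have f0: "f0 < 6" "f0 \<noteq> offset z"
    using offset_less offset_hd_block_seq_block_last unfolding f0_def c0_def z_def by auto
  have flips: "\<exists>u\<in>set code6. \<exists>j<6. block_word \<sigma> c = flip u j" if "c < 5" "c \<noteq> c0" for c
    using block_word_final_array_other[OF that[unfolded c0_def z_def]] code6_nth_offset_mem offset_less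
    unfolding \<sigma>_def by blast
  have last_block: "block_word \<sigma> c0 = (code6 ! f0)[offset z := b]"
    using block_word_final_array_last unfolding \<sigma>_def c0_def z_def f0_def by simp
  show ?thesis
  proof (cases "b = code6 ! f0 ! offset z")
    case True
    then have "block_word \<sigma> c0 = code6 ! f0"
      using last_block by simp
    then have "gks_T \<sigma> = cell c0 ` ({..<6} - {f0})"
      using gks_T_codeword_block c0 f0(1) flips by blast
    moreover have "offset z \<in> {..<6} - {f0}"
      using f0 offset_less by auto
    ultimately show ?thesis
      using z unfolding \<sigma>_def z_def by (metis imageI)
  next
    case False
    then have flip0: "block_word \<sigma> c0 = flip (code6 ! f0) (offset z)"
      using last_block by (simp add: flip_def)
    moreover have "code6 ! f0 \<in> set code6"
      using f0(1) by simp
    ultimately have "\<forall>c<5. \<exists>u\<in>set code6. \<exists>j<6. block_word \<sigma> c = flip u j"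
      using flips offset_less by blast
    then have "gks_T \<sigma> = {cell c j | c j. c < 5 \<and> j < 6 \<and> (\<exists>u\<in>set code6. block_word \<sigma> c = flip u j)}"
      by (rule gks_T_flip_blocks)
    then show ?thesis
      using z c0 offset_less flip0 \<open>code6 ! f0 \<in> set code6\<close> unfolding \<sigma>_def z_def by blast
  qed
qed

end

theorem lemma2:
  shows "\<exists>S T. is_strategy 5 30 S T"
proof (intro exI)
  show "is_strategy 5 30 gks_S gks_T"
    unfolding is_strategy_def using gks_T_bounds last_in_gks_T by blast
qed

end
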